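(* Assume $\widetilde{\epsilon}>0$. For $\zeta\in[a,\tau]$ define $$\widetilde{M_2}(\zeta)=\frac{1-\tau_2}{\epsilon-\widetilde{\epsilon}}\,\frac{1-e^{-r(\omega-\tau)}}{ra_\tau}\left(e^{\epsilon(\tau-\zeta)}-e^{\widetilde{\epsilon}(\tau-\zeta)}\right)-\frac{1-\tau_1}{\epsilon}\left(e^{\epsilon(\tau-\zeta)}-1\right),$$ so that $\widetilde{M_2}(\tau)=0$ and $\widetilde{M_2}'(\tau)=1-\tau_1-\frac{1-\tau_2}{ra_\tau}\left(1-e^{-r(\omega-\tau)}\right)$. Then: (i) If $\widetilde{M_2}(a)\ge0$ and $\widetilde{M_2}'(\tau)>0$, there exists a critical age $\bar{\zeta}\in[a,\tau)$ such that $\widetilde{M_2}(\zeta)>0$ for $a\le\zeta<\bar{\zeta}$, $\widetilde{M_2}(\bar{\zeta})=0$, and $\widetilde{M_2}(\zeta)<0$ for $\bar{\zeta}<\zeta<\tau$ (younger participants prefer EET to individual savings, older ones prefer individual savings). (ii) If $\widetilde{M_2}(a)<0$, then $\widetilde{M_2}(\zeta)<0$ for all $\zeta\in[a,\tau)$ (all prefer individual savings to EET). (iii) If $\widetilde{M_2}'(\tau)\le0$, then $\widetilde{M_2}(\zeta)>0$ for all $\zeta\in[a,\tau)$ (all prefer EET to individual savings).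
   Context: Parameters: $r>0$, $\mu>r$, $\sigma>0$, real $\gamma,\xi,\alpha,\beta$; $\nu=(\mu-r)/\sigma$, $\epsilon=\gamma-r-\xi\nu\neq0$, $\widetilde{\epsilon}=\alpha-r-\beta\nu\neq\epsilon$. Ages $a<\tau<\omega$; tax rates $\tau_1,\tau_2\in[0,1)$. With survival function $s(x)=e^{-A_m(x-a)-\frac{B_m}{\ln c}(c^x-c^a)}$ (Makeham constants $A_m,B_m,c$), $a_\tau=\int_0^\infty e^{-(r+A_m)t-\frac{B_m}{\ln c}c^\tau(c^t-1)}dt\in(0,\infty)$ is the annuity factor. Interpretation: $\zeta$ is a participant's age at the decision time, and the sign of $\widetilde{M_2}(\zeta)$ is the sign of the effect of raising the EET contribution rate $k$ (relative to individual savings) on that participant's value function. *)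

theory Defs
  imports "HOL-Analysis.Analysis"
begin

text \<open>Integrand of the annuity factor (Gompertz-Makeham survival).\<close>
definition ann_integrand :: "real \<Rightarrow> real \<Rightarrow> real \<Rightarrow> real \<Rightarrow> real \<Rightarrow> real \<Rightarrow> real" where
  "ann_integrand r Am Bm c tau t =
     exp (- (r + Am) * t - Bm / ln c * c powr tau * (c powr t - 1))"

definition annuity :: "real \<Rightarrow> real \<Rightarrow> real \<Rightarrow> real \<Rightarrow> real \<Rightarrow> real" where
  "annuity r Am Bm c tau = (\<integral>t\<in>{0..}. ann_integrand r Am Bm c tau t \<partial>lborel)"

definition M2t :: "real \<Rightarrow> real \<Rightarrow> real \<Rightarrow> real \<Rightarrow> real \<Rightarrow> real \<Rightarrow> real \<Rightarrow> real \<Rightarrow> real \<Rightarrow> real" where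
  "M2t r eps epst tau omega tau1 tau2 atau zeta =
     (1 - tau2) / (eps - epst) * ((1 - exp (- r * (omega - tau))) / (r * atau))
       * (exp (eps * (tau - zeta)) - exp (epst * (tau - zeta)))
     - (1 - tau1) / eps * (exp (eps * (tau - zeta)) - 1)"

end

theory Submission
  imports Defs
begin

text \<open>Put \<open>K = (1 - \<tau>\<^sub>2) (1 - exp (-r (\<omega> - \<tau>))) / (r a\<^sub>\<tau>) > 0\<close>. Then
\<open>M'(\<zeta>) = exp (\<epsilon> (\<tau> - \<zeta>)) h(\<zeta>)\<close> with \<open>h'(\<zeta>) = K \<epsilon>\<^sub>t exp ((\<epsilon>\<^sub>t - \<epsilon>) (\<tau> - \<zeta>)) > 0\<close>; the factor
\<open>\<epsilon> - \<epsilon>\<^sub>t\<close> cancels, so its sign is irrelevant. Hence \<open>M'\<close> changes sign at most once, from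
negative to positive, which makes \<open>M\<close> strictly quasiconvex. Since \<open>M(\<tau>) = 0\<close> and
\<open>M'(\<tau>) = 1 - \<tau>\<^sub>1 - K\<close>, the three cases follow: if \<open>M(a) < 0\<close>, quasiconvexity keeps \<open>M\<close>
negative on \<open>[a, \<tau>)\<close>; if \<open>M'(\<tau>) \<le> 0\<close>, then \<open>M' < 0\<close> left of \<open>\<tau>\<close> and \<open>M\<close> decreases to \<open>0\<close>;
if \<open>M'(\<tau>) > 0\<close>, then \<open>M\<close> is negative just left of \<open>\<tau>\<close>, the intermediate value theorem
gives a zero, and quasiconvexity fixes the signs on both sides of it.\<close>

definition strictly_quasiconvex :: "(real \<Rightarrow> real) \<Rightarrow> bool" where
  "strictly_quasiconvex f \<longleftrightarrow> (\<forall>u v w. u < v \<longrightarrow> v < w \<longrightarrow> f v < max (f u) (f w))"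

lemma strictly_quasiconvex_neg_between_zeros:
  assumes "strictly_quasiconvex f" "f u \<le> 0" "f w \<le> 0" "u < v" "v < w"
  shows "f v < 0"
  using assms unfolding strictly_quasiconvex_def by fastforce

lemma strictly_quasiconvex_pos_before_zeros:
  assumes "strictly_quasiconvex f" "f u = 0" "f w = 0" "v < u" "u < w"
  shows "f v > 0"
proof -
  define m where "m = (u + w) / 2"
  have "u < m" "m < w" using \<open>u < w\<close> by (auto simp: m_def)
  then have "f m < 0" using assms strictly_quasiconvex_neg_between_zeros [of f u w m] by simp
  moreover have "f u < max (f v) (f m)"
    using assms \<open>u < m\<close> unfolding strictly_quasiconvex_def by blast
  ultimately show ?thesis using \<open>f u = 0\<close> by (simp add: max_def split: if_splits)
qed

lemma strictly_quasiconvex_sign_change: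
  assumes qc: "strictly_quasiconvex f" and cont: "continuous_on {a..t} f"
    and "a < t" "0 \<le> f a" "f t = 0"
    and der: "(f has_real_derivative D) (at t)" "D > 0"
  shows "\<exists>z0. a \<le> z0 \<and> z0 < t \<and> (\<forall>z. a \<le> z \<and> z < z0 \<longrightarrow> f z > 0) \<and> f z0 = 0
           \<and> (\<forall>z. z0 < z \<and> z < t \<longrightarrow> f z < 0)"
proof -
  obtain d where "d > 0" and left: "\<And>h. h > 0 \<Longrightarrow> h < d \<Longrightarrow> f (t - h) < f t"
    using DERIV_pos_inc_left [OF der] by blast
  define p where "p = t - min (d / 2) (t - a)"
  have p: "a \<le> p" "p < t" "f p < 0"
    using \<open>d > 0\<close> \<open>a < t\<close> \<open>f t = 0\<close> left [of "min (d / 2) (t - a)"] by (auto simp: p_def)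
  obtain z0 where z0: "a \<le> z0" "z0 \<le> p" "f z0 = 0"
    using IVT2' [of f p 0 a] p \<open>0 \<le> f a\<close> continuous_on_subset [OF cont] by fastforce
  show ?thesis
  proof (intro exI conjI allI impI)
    show "f z > 0" if "a \<le> z \<and> z < z0" for z
      using strictly_quasiconvex_pos_before_zeros [OF qc \<open>f z0 = 0\<close> \<open>f t = 0\<close>] that z0 p by simp
    show "f z < 0" if "z0 < z \<and> z < t" for z
      using strictly_quasiconvex_neg_between_zeros [OF qc, of z0 t z] that z0 \<open>f t = 0\<close> by simp
  qed (use z0 p in auto)
qed

lemma strictly_quasiconvexI_single_crossing_deriv:
  assumes der: "\<And>x. (f has_real_derivative D x) (at x)"
    and cross: "\<And>x y. x < y \<Longrightarrow> 0 \<le> D x \<Longrightarrow> 0 < D y"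
  shows "strictly_quasiconvex f"
  unfolding strictly_quasiconvex_def
proof (intro allI impI; rule ccontr)
  fix u v w :: real
  assume "u < v" "v < w" "\<not> f v < max (f u) (f w)"
  obtain s1 where s1: "u < s1" "s1 < v" "f v - f u = (v - u) * D s1"
    using MVT2 [of u v f D] \<open>u < v\<close> der by blast
  obtain s2 where s2: "v < s2" "s2 < w" "f w - f v = (w - v) * D s2"
    using MVT2 [of v w f D] \<open>v < w\<close> der by blast
  have "0 \<le> (v - u) * D s1" using s1 \<open>\<not> f v < max (f u) (f w)\<close> by simp
  then have "0 \<le> D s1" using \<open>u < v\<close> by (simp add: zero_le_mult_iff)
  then have "0 < D s2" using cross [of s1 s2] s1 s2 by simp
  then have "0 < (w - v) * D s2" using \<open>v < w\<close> by simp
  then show False using s2 \<open>\<not> f v < max (f u) (f w)\<close> by simp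
qed

lemma single_crossing_deriv_nonpos_imp_greater_left:
  assumes der: "\<And>x. (f has_real_derivative D x) (at x)"
    and cross: "\<And>x y. x < y \<Longrightarrow> 0 \<le> D x \<Longrightarrow> 0 < D y"
    and "D t \<le> 0" "z < t"
  shows "f t < f z"
proof -
  obtain s where s: "z < s" "s < t" "f t - f z = (t - z) * D s"
    using MVT2 [of z t f D] \<open>z < t\<close> der by blast
  have "D s < 0" using cross [of s t] s \<open>D t \<le> 0\<close> by fastforce
  then have "(t - z) * D s < 0" using \<open>z < t\<close> by (simp add: mult_pos_neg)
  then show ?thesis using s by linarith
qed

lemma sign_pattern_single_crossing_deriv:
  fixes f D :: "real \<Rightarrow> real"
  assumes der: "\<And>x. (f has_real_derivative D x) (at x)"
    and cross: "\<And>x y. x < y \<Longrightarrow> 0 \<le> D x \<Longrightarrow> 0 < D y"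
    and "a < t" "f t = 0"
  shows "(0 \<le> f a \<and> D t > 0 \<longrightarrow>
          (\<exists>z0. a \<le> z0 \<and> z0 < t \<and> (\<forall>z. a \<le> z \<and> z < z0 \<longrightarrow> f z > 0) \<and> f z0 = 0
               \<and> (\<forall>z. z0 < z \<and> z < t \<longrightarrow> f z < 0)))
    \<and> (f a < 0 \<longrightarrow> (\<forall>z. a \<le> z \<and> z < t \<longrightarrow> f z < 0))
    \<and> (D t \<le> 0 \<longrightarrow> (\<forall>z. a \<le> z \<and> z < t \<longrightarrow> f z > 0))"
proof (intro conjI impI allI)
  have qc: "strictly_quasiconvex f"
    using der cross by (rule strictly_quasiconvexI_single_crossing_deriv)
  have "continuous_on {a..t} f"
    using der by (meson DERIV_isCont continuous_at_imp_continuous_on)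
  then show "0 \<le> f a \<and> D t > 0 \<Longrightarrow> \<exists>z0. a \<le> z0 \<and> z0 < t \<and> (\<forall>z. a \<le> z \<and> z < z0 \<longrightarrow> f z > 0)
      \<and> f z0 = 0 \<and> (\<forall>z. z0 < z \<and> z < t \<longrightarrow> f z < 0)"
    using strictly_quasiconvex_sign_change [OF qc _ \<open>a < t\<close> _ \<open>f t = 0\<close> der] by blast
  show "f z < 0" if "f a < 0" "a \<le> z \<and> z < t" for z
    using strictly_quasiconvex_neg_between_zeros [OF qc, of a t z] that \<open>f t = 0\<close>
    by (cases "z = a") auto
  show "f z > 0" if "D t \<le> 0" "a \<le> z \<and> z < t" for z
    using single_crossing_deriv_nonpos_imp_greater_left [of f D t z] der cross that \<open>f t = 0\<close>
    by simp
qed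

lemma single_crossing_pos_mult_strict_mono:
  fixes E H :: "real \<Rightarrow> real"
  assumes "\<And>x. E x > 0" "\<And>x y. x < y \<Longrightarrow> H x < H y" "x < y" "0 \<le> E x * H x"
  shows "0 < E y * H y"
  using assms(1) [of x] assms(1) [of y] assms(2) [OF \<open>x < y\<close>] assms(4)
  by (simp add: zero_le_mult_iff)

lemma M2t_self: "M2t r e et \<tau> \<omega> \<tau>1 \<tau>2 a\<tau> \<tau> = 0"
  by (simp add: M2t_def)

lemma has_real_derivative_M2t:
  fixes r e et \<tau> \<omega> \<tau>1 \<tau>2 a\<tau> z :: real
  assumes "e \<noteq> 0"
  defines "K \<equiv> (1 - \<tau>2) / (r * a\<tau>) * (1 - exp (- r * (\<omega> - \<tau>)))"
  shows "(M2t r e et \<tau> \<omega> \<tau>1 \<tau>2 a\<tau> has_real_derivative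
      exp (e * (\<tau> - z)) * (1 - \<tau>1 - K / (e - et) * (e - et * exp ((et - e) * (\<tau> - z))))) (at z)"
proof -
  have "M2t r e et \<tau> \<omega> \<tau>1 \<tau>2 a\<tau> =
      (\<lambda>z. K / (e - et) * (exp (e * (\<tau> - z)) - exp (et * (\<tau> - z))) - (1 - \<tau>1) / e * (exp (e * (\<tau> - z)) - 1))"
    by (auto simp: M2t_def K_def)
  moreover have "((\<lambda>z. K / (e - et) * (exp (e * (\<tau> - z)) - exp (et * (\<tau> - z))) - (1 - \<tau>1) / e * (exp (e * (\<tau> - z)) - 1))
      has_real_derivative (1 - \<tau>1) * exp (e * (\<tau> - z)) - K / (e - et) * (e * exp (e * (\<tau> - z)) - et * exp (et * (\<tau> - z)))) (at z)"
    by (rule derivative_eq_intros refl | simp)+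
      (use assms(1) in \<open>simp add: field_simps diff_divide_distrib\<close>)
  moreover have "exp (et * (\<tau> - z)) = exp (e * (\<tau> - z)) * exp ((et - e) * (\<tau> - z))"
    by (simp add: exp_add [symmetric] algebra_simps)
  ultimately show ?thesis
    by (simp add: algebra_simps)
qed

lemma strict_mono_M2t_deriv_factor:
  fixes K p e et t :: real
  assumes "K > 0" "et > 0" "e \<noteq> et" "x < y"
  shows "p - K / (e - et) * (e - et * exp ((et - e) * (t - x)))
       < p - K / (e - et) * (e - et * exp ((et - e) * (t - y)))"
proof (rule DERIV_pos_imp_increasing [OF \<open>x < y\<close>])
  fix z
  have "((\<lambda>z. p - K / (e - et) * (e - et * exp ((et - e) * (t - z)))) has_real_derivative
      K * et * exp ((et - e) * (t - z))) (at z)"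
    by (rule derivative_eq_intros refl | simp)+ (use assms(3) in \<open>simp add: field_simps\<close>)
  then show "\<exists>D. ((\<lambda>z. p - K / (e - et) * (e - et * exp ((et - e) * (t - z)))) has_real_derivative D) (at z)
      \<and> D > 0"
    using assms by auto
qed

theorem theorem3p3:
  fixes r \<mu> \<sigma> \<gamma> \<xi> \<alpha> \<beta> a \<tau> \<omega> \<tau>1 \<tau>2 Am Bm c :: real
  defines "\<nu> \<equiv> (\<mu> - r) / \<sigma>"
  defines "\<epsilon> \<equiv> \<gamma> - r - \<xi> * \<nu>"
  defines "\<epsilon>t \<equiv> \<alpha> - r - \<beta> * \<nu>"
  defines "a\<tau> \<equiv> annuity r Am Bm c \<tau>"
  defines "M \<equiv> M2t r \<epsilon> \<epsilon>t \<tau> \<omega> \<tau>1 \<tau>2 a\<tau>"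
  assumes hr: "r > 0" and hmu: "\<mu> > r" and hsig: "\<sigma> > 0"
    and heps: "\<epsilon> \<noteq> 0" and hepst: "\<epsilon>t \<noteq> \<epsilon>" and hepst_pos: "\<epsilon>t > 0"
    and hages: "a < \<tau>" "\<tau> < \<omega>"
    and htau1: "0 \<le> \<tau>1" "\<tau>1 < 1" and htau2: "0 \<le> \<tau>2" "\<tau>2 < 1"
    and hc: "c > 0" "c \<noteq> 1"
    and hint: "set_integrable lborel {0..} (ann_integrand r Am Bm c \<tau>)"
    and hatau: "a\<tau> > 0"
  shows "M \<tau> = 0
    \<and> deriv M \<tau> = 1 - \<tau>1 - (1 - \<tau>2) / (r * a\<tau>) * (1 - exp (- r * (\<omega> - \<tau>)))
    \<and> (M a \<ge> 0 \<and> deriv M \<tau> > 0 \<longrightarrow>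
        (\<exists>\<zeta>b. a \<le> \<zeta>b \<and> \<zeta>b < \<tau> \<and> (\<forall>\<zeta>. a \<le> \<zeta> \<and> \<zeta> < \<zeta>b \<longrightarrow> M \<zeta> > 0)
             \<and> M \<zeta>b = 0 \<and> (\<forall>\<zeta>. \<zeta>b < \<zeta> \<and> \<zeta> < \<tau> \<longrightarrow> M \<zeta> < 0)))
    \<and> (M a < 0 \<longrightarrow> (\<forall>\<zeta>. a \<le> \<zeta> \<and> \<zeta> < \<tau> \<longrightarrow> M \<zeta> < 0))
    \<and> (deriv M \<tau> \<le> 0 \<longrightarrow> (\<forall>\<zeta>. a \<le> \<zeta> \<and> \<zeta> < \<tau> \<longrightarrow> M \<zeta> > 0))"
proof -
  define K where "K = (1 - \<tau>2) / (r * a\<tau>) * (1 - exp (- r * (\<omega> - \<tau>)))"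
  define h where "h z = 1 - \<tau>1 - K / (\<epsilon> - \<epsilon>t) * (\<epsilon> - \<epsilon>t * exp ((\<epsilon>t - \<epsilon>) * (\<tau> - z)))" for z
  define D where "D z = exp (\<epsilon> * (\<tau> - z)) * h z" for z
  have "K > 0" using hr hages htau2 hatau by (simp add: K_def)
  have der: "\<And>z. (M has_real_derivative D z) (at z)"
    unfolding M_def D_def h_def K_def using heps by (rule has_real_derivative_M2t)
  have cross: "\<And>x y. x < y \<Longrightarrow> 0 \<le> D x \<Longrightarrow> 0 < D y"
    unfolding D_def h_def
    by (rule single_crossing_pos_mult_strict_mono [OF exp_gt_zero strict_mono_M2t_deriv_factor])
      (use \<open>K > 0\<close> hepst_pos hepst in auto)
  have M\<tau>: "M \<tau> = 0" by (simp add: M_def M2t_self)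
  have "deriv M \<tau> = D \<tau>" using der by (rule DERIV_imp_deriv)
  also have "D \<tau> = 1 - \<tau>1 - K" using hepst by (simp add: D_def h_def)
  finally have deriv_M\<tau>: "deriv M \<tau> = 1 - \<tau>1 - K" .
  show ?thesis
    using sign_pattern_single_crossing_deriv [OF der cross \<open>a < \<tau>\<close> M\<tau>] M\<tau> deriv_M\<tau>
      DERIV_imp_deriv [OF der]
    by (simp add: K_def)
qed

end
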